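(* Let $\sigma>0$, $r\in\mathbb{R}$, $A>0$ and $B>0$, and consider the system of ODEs \[ \dot{x}_d = X,\quad \dot{X}=\sigma\big(Y-X+A\sin(Bx_d)\big),\quad \dot{Y}=-XZ+rX-Y,\quad \dot{Z}=XY-Z . \] For every integer $k$, the point $(x_d,X,Y,Z)=(k\pi/B,0,0,0)$ is an equilibrium. If $k$ is even, the Jacobian matrix of the system at this equilibrium has a real positive eigenvalue, so this equilibrium is linearly unstable for all values of $\sigma>0$, $r$, $A>0$, $B>0$.
   Context: The system models a one-dimensional wave-particle entity (a walking droplet) in the sinusoidal potential $U(x)=(A/B)\cos(Bx)$: $x_d$ is the particle position, $X$ its velocity, and $Y,Z$ are wave-memory variables. The equilibria with even $k$ correspond to the particle sitting at the maxima of the potential. *)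

theory Defs
  imports "HOL-Analysis.Analysis"
begin

text \<open>State vector (x_d, X, Y, Z) is a vector in real^4 with components 1,2,3,4.\<close>

definition droplet_field :: "real \<Rightarrow> real \<Rightarrow> real \<Rightarrow> real \<Rightarrow> real^4 \<Rightarrow> real^4" where
  "droplet_field \<sigma> r A B u =
     vector [ u$2,
              \<sigma> * (u$3 - u$2 + A * sin (B * u$1)),
              - (u$2 * u$4) + r * u$2 - u$3,
              u$2 * u$3 - u$4 ]"

definition jacobian :: "(real^'n \<Rightarrow> real^'n) \<Rightarrow> real^'n \<Rightarrow> real^'n^'n" where
  "jacobian F p = matrix (frechet_derivative F (at p))"

end

theory Submission
  imports Defs "HOL-Real_Asymp.Real_Asymp"
begin

text \<open>
  At the equilibrium \<open>p = (k\<pi>/B, 0, 0, 0)\<close> with \<open>k\<close> even we have \<open>cos (B x\<^sub>d) = 1\<close>, so the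
  Jacobian acts on the first three coordinates by the matrix with rows
  \<open>(0, 1, 0)\<close>, \<open>(\<sigma>AB, -\<sigma>, \<sigma>)\<close>, \<open>(0, r, -1)\<close>. Its characteristic polynomial
  \<open>l((l + \<sigma>)(l + 1) - \<sigma>r) - \<sigma>AB(l + 1)\<close> is \<open>-\<sigma>AB < 0\<close> at \<open>l = 0\<close> and tends to \<open>+\<infinity>\<close>,
  hence has a positive root \<open>l\<close>, with eigenvector \<open>(1, l, rl/(l + 1), 0)\<close>.
\<close>

lemma vector_4 [simp]:
  "(vector [x, y, z, w] :: ('a::zero)^4) $ 1 = x"
  "(vector [x, y, z, w] :: ('a::zero)^4) $ 2 = y"
  "(vector [x, y, z, w] :: ('a::zero)^4) $ 3 = z"
  "(vector [x, y, z, w] :: ('a::zero)^4) $ 4 = w"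
  unfolding vector_def by simp_all

lemma jacobian_mult_vector:
  assumes "(F has_derivative F') (at p)"
  shows "jacobian F p *v v = F' v"
proof -
  have "jacobian F p = matrix F'"
    unfolding jacobian_def using frechet_derivative_at[OF assms] by simp
  then show ?thesis
    using matrix_works[of F' v] has_derivative_linear[OF assms]
    by (simp add: scalar_mult_eq_scaleR)
qed

lemma continuous_at_top_has_zero_above:
  fixes f :: "real \<Rightarrow> real"
  assumes "continuous_on {a..} f" and "f a \<le> 0" and "filterlim f at_top at_top"
  shows "\<exists>x\<ge>a. f x = 0"
proof -
  obtain b where b: "b \<ge> a" "f b \<ge> 0"
    using eventually_conj[OF filterlim_at_top_dense[THEN iffD1, OF assms(3), rule_format, of 0]
        eventually_ge_at_top[of a]]
    by (auto simp: eventually_at_top_linorder intro: less_imp_le)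
  have "continuous_on {a..b} f"
    using assms(1) by (rule continuous_on_subset) auto
  then show ?thesis
    using IVT'[of f a 0 b] assms(2) b by auto
qed

lemma droplet_cubic_has_positive_root:
  fixes a s r :: real
  assumes "a > 0"
  shows "\<exists>l>0. l * ((l + s) * (l + 1) - s * r) = a * (l + 1)"
proof -
  define f where "f l = l * ((l + s) * (l + 1) - s * r) - a * (l + 1)" for l
  have "filterlim f at_top at_top"
    unfolding f_def by real_asymp
  moreover have "continuous_on {0..} f"
    unfolding f_def by (intro continuous_intros)
  ultimately obtain l where "l \<ge> 0" "f l = 0"
    using continuous_at_top_has_zero_above[of 0 f] assms by (auto simp: f_def)
  moreover from this have "l \<noteq> 0"
    using assms by (auto simp: f_def)
  ultimately show ?thesis
    by (intro exI[of _ l]) (auto simp: f_def)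
qed

definition droplet_derivative :: "real \<Rightarrow> real \<Rightarrow> real \<Rightarrow> real \<Rightarrow> real^4 \<Rightarrow> real^4 \<Rightarrow> real^4" where
  "droplet_derivative \<sigma> r A B u h =
     vector [ h$2,
              \<sigma> * (h$3 - h$2 + A * (cos (B * u$1) * (B * h$1))),
              - (h$2 * u$4 + u$2 * h$4) + r * h$2 - h$3,
              h$2 * u$3 + u$2 * h$3 - h$4 ]"

lemma has_derivative_droplet_field:
  "(droplet_field \<sigma> r A B has_derivative droplet_derivative \<sigma> r A B u) (at u)"
proof -
  have vec_nth: "((\<lambda>x. x $ i) has_derivative (\<lambda>x. x $ i)) F" for i :: 4 and F
    by (rule bounded_linear_imp_has_derivative[OF bounded_linear_vec_nth])
  have "((\<lambda>x. droplet_field \<sigma> r A B x $ j) has_derivative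
          (\<lambda>h. droplet_derivative \<sigma> r A B u h $ j)) (at u)" for j
    using exhaust_4[of j]
    by (elim disjE; simp add: droplet_field_def droplet_derivative_def)
       (auto intro!: derivative_eq_intros vec_nth simp: algebra_simps)
  then show ?thesis
    by (subst has_derivative_componentwise_within) (auto simp: Basis_vec_def inner_axis)
qed

lemma droplet_field_equilibrium:
  assumes "B \<noteq> 0"
  shows "droplet_field \<sigma> r A B (vector [of_int k * pi / B, 0, 0, 0]) = 0"
  using assms by (simp add: droplet_field_def vec_eq_iff forall_4 sin_zero_iff_int2)

lemma droplet_derivative_eigenvector:
  assumes "cos (B * x) = 1" and "l > 0"
    and "l * ((l + \<sigma>) * (l + 1) - \<sigma> * r) = \<sigma> * A * B * (l + 1)"
  shows "droplet_derivative \<sigma> r A B (vector [x, 0, 0, 0]) (vector [1, l, r * l / (l + 1), 0])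
       = l *\<^sub>R vector [1, l, r * l / (l + 1), 0]"
proof -
  have "l + 1 \<noteq> 0"
    using assms(2) by simp
  then have "\<sigma> * (r * l / (l + 1) - l + A * B) = l * l"
    and "r * l - r * l / (l + 1) = l * (r * l / (l + 1))"
    using assms(3) by (simp_all add: field_simps)
  then show ?thesis
    using assms(1) by (simp add: droplet_derivative_def vec_eq_iff forall_4)
qed

theorem mainTheorem1:
  fixes \<sigma> r A B :: real and k :: int
  assumes "\<sigma> > 0" and "A > 0" and "B > 0"
  shows "droplet_field \<sigma> r A B (vector [of_int k * pi / B, 0, 0, 0]) = 0
     \<and> (even k \<longrightarrow>
          droplet_field \<sigma> r A B differentiable (at (vector [of_int k * pi / B, 0, 0, 0]))
        \<and> (\<exists>l::real. l > 0 \<and> (\<exists>v::real^4. v \<noteq> 0 \<and>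
             jacobian (droplet_field \<sigma> r A B) (vector [of_int k * pi / B, 0, 0, 0]) *v v = l *\<^sub>R v)))"
proof -
  define x where "x = of_int k * pi / B"
  have "\<exists>l>0. \<exists>v::real^4. v \<noteq> 0 \<and>
          jacobian (droplet_field \<sigma> r A B) (vector [x, 0, 0, 0]) *v v = l *\<^sub>R v" if "even k"
  proof -
    from \<open>even k\<close> obtain m where "k = 2 * m" by blast
    then have "cos (B * x) = 1"
      using assms(3) cos_int_2pin[of m] by (simp add: x_def mult.commute mult.left_commute)
    moreover obtain l where "l > 0" "l * ((l + \<sigma>) * (l + 1) - \<sigma> * r) = \<sigma> * A * B * (l + 1)"
      using droplet_cubic_has_positive_root[of "\<sigma> * A * B"] assms by auto
    ultimately show ?thesis
      using droplet_derivative_eigenvector jacobian_mult_vector[OF has_derivative_droplet_field]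
      by (intro exI[of _ l] conjI exI[of _ "vector [1, l, r * l / (l + 1), 0]"])
         (auto simp: vec_eq_iff intro: exI[of _ 1])
  qed
  moreover have "droplet_field \<sigma> r A B differentiable (at (vector [x, 0, 0, 0]))"
    using has_derivative_droplet_field unfolding differentiable_def by blast
  ultimately show ?thesis
    using droplet_field_equilibrium assms(3) unfolding x_def by simp
qed

end
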